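(* Let $\mathcal{X}_1,\mathcal{X}_2$ be non-empty sets, $\mathcal{B}_1\subseteq\mathcal{P}(\mathcal{X}_1)\setminus\{\emptyset\}$, $\mathcal{B}_2\subseteq\mathcal{P}(\mathcal{X}_2)\setminus\{\emptyset\}$, and for $i\in\{1,2\}$ let $\underline{P}_i$ be a coherent conditional lower prevision on $\mathcal{C}_i\subseteq\mathcal{C}(\mathcal{X}_i)$ with natural extension $\underline{E}_i$ to $\mathcal{C}(\mathcal{X}_i)$, and let $\overline{E}_i(g):=-\underline{E}_i(-g)$. Let $\{i,j\}=\{1,2\}$. Then for any $h\in\mathcal{G}(\mathcal{X}_j)$ and any $\mathcal{B}_i$-measurable $g\in\mathcal{G}_{\geq0}(\mathcal{X}_i)$, $$(\underline{P}_1\otimes\underline{P}_2)(gh)=\underline{E}_i\big(g\,\underline{E}_j(h)\big)=\begin{cases}\underline{E}_i(g)\underline{E}_j(h)&\text{if }\underline{E}_j(h)\geq0,\\ \overline{E}_i(g)\underline{E}_j(h)&\text{if }\underline{E}_j(h)\leq0.\end{cases}$$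
   Context: Gambles on a non-empty set $\mathcal{X}$ are bounded real functions; $\mathcal{G}(\mathcal{X})$, $\mathcal{G}_{\geq0}(\mathcal{X})$, $\mathcal{G}_{>0}(\mathcal{X})$ denote all gambles, non-negative gambles, non-negative non-zero gambles. For $\mathcal{A}\subseteq\mathcal{G}(\mathcal{X})$: $\mathrm{posi}(\mathcal{A}):=\{\sum_{i=1}^n\lambda_if_i\colon n\in\mathbb{N},\lambda_i>0,f_i\in\mathcal{A}\}$, $\mathcal{E}(\mathcal{A}):=\mathrm{posi}(\mathcal{A}\cup\mathcal{G}_{>0}(\mathcal{X}))$. A coherent set of desirable gambles $\mathcal{D}\subseteq\mathcal{G}(\mathcal{X})$ satisfies: (D1) $f\geq0,f\neq0\Rightarrow f\in\mathcal{D}$; (D2) $f\in\mathcal{D},\lambda>0\Rightarrow\lambda f\in\mathcal{D}$; (D3) $f,g\in\mathcal{D}\Rightarrow f+g\in\mathcal{D}$; (D4) $f\leq0\Rightarrow f\notin\mathcal{D}$. $\mathcal{C}(\mathcal{X}):=\mathcal{G}(\mathcal{X})\times(\mathcal{P}(\mathcal{X})\setminus\{\emptyset\})$; a conditional lower prevision on $\mathcal{C}\subseteq\mathcal{C}(\mathcal{X})$ is a map $(f,B)\mapsto\underline{P}(f\vert B)\in\mathbb{R}\cup\{\pm\infty\}$. For $\mathcal{D}\subseteq\mathcal{G}(\mathcal{X})$, $\underline{P}_{\mathcal{D}}(f\vert B):=\sup\{\mu\in\mathbb{R}\colon[f-\mu]\mathbb{I}_B\in\mathcal{D}\}$. $\underline{P}$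 is coherent if $\underline{P}=\underline{P}_{\mathcal{D}}$ on its domain for some coherent set of desirable gambles $\mathcal{D}$. For coherent $\underline{P}$ on $\mathcal{C}$, $\mathcal{E}(\underline{P}):=\mathcal{E}(\{[f-\mu]\mathbb{I}_B\colon(f,B)\in\mathcal{C},\mu<\underline{P}(f\vert B)\})$ and its natural extension is $\underline{E}(f\vert B):=\underline{P}_{\mathcal{E}(\underline{P})}(f\vert B)$ for all $(f,B)\in\mathcal{C}(\mathcal{X})$. Unconditional notation: $\underline{P}(f):=\underline{P}(f\vert\mathcal{X})$. Gambles on $\mathcal{X}_i$ are identified with their cylindrical extensions to $\mathcal{X}_1\times\mathcal{X}_2$, events $B\subseteq\mathcal{X}_1$ with $B\times\mathcal{X}_2$ (similarly for $\mathcal{X}_2$). For coherent sets of desirable gambles $\mathcal{D}_1,\mathcal{D}_2$: $\mathcal{D}_1\otimes\mathcal{D}_2:=\mathcal{E}(\mathcal{A}_{1\to2}\cup\mathcal{A}_{2\to1})$, $\mathcal{A}_{1\to2}:=\{f_2(X_2)\mathbb{I}_{B_1}(X_1)\colon f_2\in\mathcal{D}_2,B_1\in\mathcal{B}_1\cup\{\mathcal{X}_1\}\}$, $\mathcal{A}_{2\to1}:=\{f_1(X_1)\mathbb{I}_{B_2}(X_2)\colon f_1\in\mathcal{D}_1,B_2\in\mathcal{B}_2\cup\{\mathcal{X}_2\}\}$. Then $(\underline{P}_1\otimes\underline{P}_2)(f\vert B):=\underline{P}_{\mathcal{D}}(f\vert B)$ for $(f,B)\in\mathcal{C}(\mathcal{X}_1\times\mathcal{X}_2)$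 with $\mathcal{D}=\mathcal{E}(\underline{P}_1)\otimes\mathcal{E}(\underline{P}_2)$. Measurability: for $\mathcal{B}\subseteq\mathcal{P}(\mathcal{X})\setminus\{\emptyset\}$, $g\in\mathcal{G}_{\geq0}(\mathcal{X})$ is simple $\mathcal{B}$-measurable if $g=c_0+\sum_{k=1}^nc_k\mathbb{I}_{B_k}$ for some $n\in\mathbb{N}\cup\{0\}$, $c_0,\dots,c_n\geq0$, $B_k\in\mathcal{B}$; $g\in\mathcal{G}_{\geq0}(\mathcal{X})$ is $\mathcal{B}$-measurable if there is a sequence of simple $\mathcal{B}$-measurable $g_n\in\mathcal{G}_{\geq0}(\mathcal{X})$ with $\sup|g-g_n|\to0$. *)

theory Defs
  imports Complex_Main "HOL-Library.Extended_Real" "HOL-Library.Indicator_Function"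
begin

text \<open>Gambles on a type (the possibility space is the whole type, which is non-empty).\<close>
definition gambles :: "('a \<Rightarrow> real) set" where
  "gambles = {f. \<exists>M. \<forall>x. \<bar>f x\<bar> \<le> M}"

definition nonneg_gambles :: "('a \<Rightarrow> real) set" where
  "nonneg_gambles = {f \<in> gambles. \<forall>x. f x \<ge> 0}"

definition pos_gambles :: "('a \<Rightarrow> real) set" where
  "pos_gambles = {f \<in> gambles. (\<forall>x. f x \<ge> 0) \<and> f \<noteq> (\<lambda>x. 0)}"

definition posi :: "('a \<Rightarrow> real) set \<Rightarrow> ('a \<Rightarrow> real) set" where
  "posi A = {f. \<exists>n::nat. n \<ge> 1 \<and> (\<exists>lam fs. (\<forall>i<n. lam i > (0::real) \<and> fs i \<in> A)
              \<and> f = (\<lambda>x. \<Sum>i<n. lam i * fs i x))}"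

definition natext_set :: "('a \<Rightarrow> real) set \<Rightarrow> ('a \<Rightarrow> real) set" where
  "natext_set A = posi (A \<union> pos_gambles)"

definition coherent_dgs :: "('a \<Rightarrow> real) set \<Rightarrow> bool" where
  "coherent_dgs D \<longleftrightarrow> D \<subseteq> gambles
     \<and> (\<forall>f \<in> gambles. (\<forall>x. f x \<ge> 0) \<and> f \<noteq> (\<lambda>x. 0) \<longrightarrow> f \<in> D)
     \<and> (\<forall>f \<in> D. \<forall>lam::real. lam > 0 \<longrightarrow> (\<lambda>x. lam * f x) \<in> D)
     \<and> (\<forall>f \<in> D. \<forall>g \<in> D. (\<lambda>x. f x + g x) \<in> D)
     \<and> (\<forall>f \<in> gambles. (\<forall>x. f x \<le> 0) \<longrightarrow> f \<notin> D)"

definition Cdom :: "(('a \<Rightarrow> real) \<times> 'a set) set" where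
  "Cdom = gambles \<times> {B. B \<noteq> {}}"

text \<open>Lower prevision induced by a set of desirable gambles (Sup of empty set is -\<infinity>).\<close>
definition lpr :: "('a \<Rightarrow> real) set \<Rightarrow> ('a \<Rightarrow> real) \<Rightarrow> 'a set \<Rightarrow> ereal" where
  "lpr D f B = Sup (ereal ` {mu. (\<lambda>x. (f x - mu) * indicator B x) \<in> D})"

definition coherent_clp ::
  "(('a \<Rightarrow> real) \<times> 'a set) set \<Rightarrow> (('a \<Rightarrow> real) \<Rightarrow> 'a set \<Rightarrow> ereal) \<Rightarrow> bool" where
  "coherent_clp C P \<longleftrightarrow> (\<exists>D. coherent_dgs D \<and> (\<forall>(f, B) \<in> C. P f B = lpr D f B))"

definition natext_clp_set ::
  "(('a \<Rightarrow> real) \<times> 'a set) set \<Rightarrow> (('a \<Rightarrow> real) \<Rightarrow> 'a set \<Rightarrow> ereal) \<Rightarrow> ('a \<Rightarrow> real) set" where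
  "natext_clp_set C P = natext_set
     {h. \<exists>f B mu. (f, B) \<in> C \<and> ereal mu < P f B \<and> h = (\<lambda>x. (f x - mu) * indicator B x)}"

definition natext ::
  "(('a \<Rightarrow> real) \<times> 'a set) set \<Rightarrow> (('a \<Rightarrow> real) \<Rightarrow> 'a set \<Rightarrow> ereal) \<Rightarrow> ('a \<Rightarrow> real) \<Rightarrow> 'a set \<Rightarrow> ereal" where
  "natext C P f B = lpr (natext_clp_set C P) f B"

definition prod_dgs ::
  "'a set set \<Rightarrow> 'b set set \<Rightarrow> ('a \<Rightarrow> real) set \<Rightarrow> ('b \<Rightarrow> real) set \<Rightarrow> ('a \<times> 'b \<Rightarrow> real) set" where
  "prod_dgs B1 B2 D1 D2 = natext_set
     ({h. \<exists>f2 E1. f2 \<in> D2 \<and> E1 \<in> B1 \<union> {UNIV} \<and> h = (\<lambda>(x, y). f2 y * indicator E1 x)} \<union>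
      {h. \<exists>f1 E2. f1 \<in> D1 \<and> E2 \<in> B2 \<union> {UNIV} \<and> h = (\<lambda>(x, y). f1 x * indicator E2 y)})"

definition prod_clp ::
  "'a set set \<Rightarrow> 'b set set \<Rightarrow>
   (('a \<Rightarrow> real) \<times> 'a set) set \<Rightarrow> (('a \<Rightarrow> real) \<Rightarrow> 'a set \<Rightarrow> ereal) \<Rightarrow>
   (('b \<Rightarrow> real) \<times> 'b set) set \<Rightarrow> (('b \<Rightarrow> real) \<Rightarrow> 'b set \<Rightarrow> ereal) \<Rightarrow>
   ('a \<times> 'b \<Rightarrow> real) \<Rightarrow> ('a \<times> 'b) set \<Rightarrow> ereal" where
  "prod_clp B1 B2 C1 P1 C2 P2 f B =
     lpr (prod_dgs B1 B2 (natext_clp_set C1 P1) (natext_clp_set C2 P2)) f B"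

definition simple_meas :: "'a set set \<Rightarrow> ('a \<Rightarrow> real) \<Rightarrow> bool" where
  "simple_meas \<B> g \<longleftrightarrow> g \<in> nonneg_gambles \<and>
     (\<exists>(n::nat) (c::nat \<Rightarrow> real) (Bs::nat \<Rightarrow> 'a set).
        (\<forall>k\<le>n. c k \<ge> 0) \<and> (\<forall>k\<in>{1..n}. Bs k \<in> \<B>) \<and>
        g = (\<lambda>x. c 0 + (\<Sum>k=1..n. c k * indicator (Bs k) x)))"

definition meas :: "'a set set \<Rightarrow> ('a \<Rightarrow> real) \<Rightarrow> bool" where
  "meas \<B> g \<longleftrightarrow> g \<in> nonneg_gambles \<and>
     (\<exists>gs::nat \<Rightarrow> 'a \<Rightarrow> real. (\<forall>n. simple_meas \<B> (gs n)) \<and>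
        (\<forall>e>0. \<exists>N. \<forall>n\<ge>N. \<forall>x. \<bar>g x - gs n x\<bar> \<le> e))"

end

theory Submission
  imports Defs
begin

(* Let D1, D2 be the natural extensions of P1, P2 as sets of desirable gambles and E1, E2 their
   lower previsions; by the symmetry of the product it suffices to take g on the first factor.

   Lower bound: for B1-simple g and mu < E2(h), the gamble g(x) (h(y) - mu) is a non-negative
   combination of generators 1_B(x) (h(y) - mu) of the product, so g h - nu lies in the product
   as soon as g mu - nu lies in D1.  Uniform approximation extends this to measurable g and
   yields E1(g E2(h)) as a lower bound.

   Upper bound: if g h - nu lies in the product, it is a positive combination of generators, each
   dominating a product phi_i(x) alpha_i(y) with E1(phi_i) >= 0 and alpha_i in D2 or zero.  By the
   Hahn-Banach theorem there is a linear majorant q of E1 on the span of g and the phi_i whose value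
   q0 on g is any number between the lower and upper previsions of g.  Then q(phi_i) >= 0, and
   evaluating at each y gives nu <= E2(q0 h).  Choosing q0 = E1(g) or q0 = -E1(-g) according to the
   sign of E2(h) turns this into nu <= E1(g E2(h)). *)

section \<open>Gambles and coherent sets of desirable gambles\<close>

lemma gamblesI: "(\<And>x. \<bar>f x\<bar> \<le> M) \<Longrightarrow> f \<in> gambles"
  unfolding gambles_def by blast

lemma gambles_bounded:
  assumes "f \<in> gambles"
  shows "\<exists>M\<ge>0. \<forall>x. \<bar>f x\<bar> \<le> M"
proof -
  obtain M where "\<forall>x. \<bar>f x\<bar> \<le> M" using assms unfolding gambles_def by blast
  then show ?thesis by (intro exI[of _ "max M 0"]) (auto simp: le_max_iff_disj)
qed

lemma gambles_const [simp]: "(\<lambda>x. c) \<in> gambles"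
  by (rule gamblesI[of _ "\<bar>c\<bar>"]) simp

lemma gambles_indicator [simp]: "indicator A \<in> gambles"
  by (rule gamblesI[of _ 1]) (simp add: indicator_def)

lemma gambles_comp: "f \<in> gambles \<Longrightarrow> (\<lambda>x. f (\<sigma> x)) \<in> gambles"
  unfolding gambles_def by blast

lemma gambles_add: "f \<in> gambles \<Longrightarrow> g \<in> gambles \<Longrightarrow> (\<lambda>x. f x + g x) \<in> gambles"
proof -
  assume "f \<in> gambles" "g \<in> gambles"
  then obtain M N where "\<And>x. \<bar>f x\<bar> \<le> M" "\<And>x. \<bar>g x\<bar> \<le> N" by (meson gambles_bounded)
  then have "\<And>x. \<bar>f x + g x\<bar> \<le> M + N" by (meson abs_triangle_ineq add_mono order_trans)
  then show ?thesis by (rule gamblesI)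
qed

lemma gambles_mult: "f \<in> gambles \<Longrightarrow> g \<in> gambles \<Longrightarrow> (\<lambda>x. f x * g x) \<in> gambles"
proof -
  assume "f \<in> gambles" "g \<in> gambles"
  then obtain M N where "M \<ge> 0" "\<And>x. \<bar>f x\<bar> \<le> M" "\<And>x. \<bar>g x\<bar> \<le> N" by (meson gambles_bounded)
  then have "\<And>x. \<bar>f x * g x\<bar> \<le> M * N" by (simp add: abs_mult mult_mono')
  then show ?thesis by (rule gamblesI)
qed

lemma gambles_scale: "f \<in> gambles \<Longrightarrow> (\<lambda>x. c * f x) \<in> gambles"
  using gambles_mult[OF gambles_const] .

lemma gambles_scale_right: "f \<in> gambles \<Longrightarrow> (\<lambda>x. f x * c) \<in> gambles"
  using gambles_mult[OF _ gambles_const] .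

lemma gambles_uminus: "f \<in> gambles \<Longrightarrow> (\<lambda>x. - f x) \<in> gambles"
  using gambles_scale[of f "-1"] by simp

lemma gambles_diff: "f \<in> gambles \<Longrightarrow> g \<in> gambles \<Longrightarrow> (\<lambda>x. f x - g x) \<in> gambles"
  using gambles_add[of f "\<lambda>x. - g x"] gambles_uminus[of g] by simp

lemma gambles_sum:
  "(\<And>i. i \<in> I \<Longrightarrow> f i \<in> gambles) \<Longrightarrow> (\<lambda>x. \<Sum>i\<in>I. f i x) \<in> gambles"
proof (induction I rule: infinite_finite_induct)
  case (insert a I)
  then show ?case using gambles_add[of "f a" "\<lambda>x. \<Sum>i\<in>I. f i x"] by simp
qed simp_all

lemma pos_gamblesI: "f \<in> gambles \<Longrightarrow> (\<And>x. f x \<ge> 0) \<Longrightarrow> f z \<noteq> 0 \<Longrightarrow> f \<in> pos_gambles"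
  unfolding pos_gambles_def by auto

lemma pos_gambles_comp_surj:
  assumes "f \<in> pos_gambles" "surj \<sigma>"
  shows "(\<lambda>x. f (\<sigma> x)) \<in> pos_gambles"
proof -
  obtain z where "f z \<noteq> 0" using assms(1) unfolding pos_gambles_def by auto
  moreover obtain x where "\<sigma> x = z" using assms(2) by (metis surjD)
  ultimately show ?thesis
    using assms(1) gambles_comp[of f \<sigma>] by (intro pos_gamblesI[where z = x]) (auto simp: pos_gambles_def)
qed

lemma add_closed_sum_mem:
  assumes add: "\<And>f g. f \<in> A \<Longrightarrow> g \<in> A \<Longrightarrow> (\<lambda>x. f x + g x) \<in> A"
  shows "finite I \<Longrightarrow> I \<noteq> {} \<Longrightarrow> (\<And>i. i \<in> I \<Longrightarrow> f i \<in> A) \<Longrightarrow> (\<lambda>x. \<Sum>i\<in>I. f i x) \<in> A"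
proof (induction I rule: finite_ne_induct)
  case (insert a I)
  then show ?case using add[of "f a" "\<lambda>x. \<Sum>i\<in>I. f i x"] by simp
qed simp

lemma add_closed_sum_mem_or_zero:
  assumes add: "\<And>f g. f \<in> A \<Longrightarrow> g \<in> A \<Longrightarrow> (\<lambda>x. f x + g x) \<in> A"
    and I: "finite I" and mem: "\<And>i. i \<in> I \<Longrightarrow> f i \<in> A \<or> f i = (\<lambda>x. 0)"
  shows "(\<lambda>x. \<Sum>i\<in>I. f i x) \<in> A \<or> (\<lambda>x. \<Sum>i\<in>I. f i x) = (\<lambda>x. 0)"
proof -
  define J where "J = {i \<in> I. f i \<noteq> (\<lambda>x. 0)}"
  have J: "finite J" "J \<subseteq> I" using I by (simp_all add: J_def)
  have "(\<Sum>i\<in>I. f i x) = (\<Sum>i\<in>J. f i x)" for x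
    by (rule sum.mono_neutral_right[OF I J(2)]) (simp add: J_def)
  moreover have "(\<lambda>x. \<Sum>i\<in>J. f i x) \<in> A" if "J \<noteq> {}"
    by (rule add_closed_sum_mem[OF add J(1) that]) (use mem in \<open>auto simp: J_def\<close>)
  ultimately show ?thesis by (cases "J = {}") simp_all
qed

lemma coherent_dgs_gambles: "coherent_dgs D \<Longrightarrow> f \<in> D \<Longrightarrow> f \<in> gambles"
  unfolding coherent_dgs_def by blast

lemma coherent_dgs_pos: "coherent_dgs D \<Longrightarrow> f \<in> pos_gambles \<Longrightarrow> f \<in> D"
  unfolding coherent_dgs_def pos_gambles_def by blast

lemma coherent_dgs_scale: "coherent_dgs D \<Longrightarrow> f \<in> D \<Longrightarrow> t > 0 \<Longrightarrow> (\<lambda>x. t * f x) \<in> D"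
  unfolding coherent_dgs_def by blast

lemma coherent_dgs_add: "coherent_dgs D \<Longrightarrow> f \<in> D \<Longrightarrow> g \<in> D \<Longrightarrow> (\<lambda>x. f x + g x) \<in> D"
  unfolding coherent_dgs_def by blast

lemma coherent_dgs_not_nonpos:
  assumes "coherent_dgs D" "f \<in> D"
  shows "\<exists>x. f x > 0"
proof (rule ccontr)
  assume "\<not> (\<exists>x. f x > 0)"
  then have "\<forall>x. f x \<le> 0" by (simp add: not_less)
  with assms show False unfolding coherent_dgs_def by blast
qed

lemma coherent_dgs_upclosed:
  assumes D: "coherent_dgs D" and "f \<in> D" "g \<in> gambles" "\<And>x. f x \<le> g x"
  shows "g \<in> D"
proof (cases "g = f")
  case False
  then obtain z where "g z \<noteq> f z" by auto
  then have "(\<lambda>x. g x - f x) \<in> pos_gambles"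
    using assms gambles_diff[OF \<open>g \<in> gambles\<close> coherent_dgs_gambles[OF D \<open>f \<in> D\<close>]]
    by (intro pos_gamblesI[where z = z]) auto
  from coherent_dgs_add[OF D \<open>f \<in> D\<close> coherent_dgs_pos[OF D this]] show ?thesis by simp
qed (use assms in simp)

lemma coherent_dgs_nonneg_comb:
  assumes D: "coherent_dgs D" and "finite I"
    and c: "\<And>i. i \<in> I \<Longrightarrow> c i \<ge> 0" and f: "\<And>i. i \<in> I \<Longrightarrow> f i \<in> D \<or> f i = (\<lambda>x. 0)"
  shows "(\<lambda>x. \<Sum>i\<in>I. c i * f i x) \<in> D \<or> (\<lambda>x. \<Sum>i\<in>I. c i * f i x) = (\<lambda>x. 0)"
proof (rule add_closed_sum_mem_or_zero[OF coherent_dgs_add[OF D] \<open>finite I\<close>])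
  fix i
  assume "i \<in> I"
  then show "(\<lambda>x. c i * f i x) \<in> D \<or> (\<lambda>x. c i * f i x) = (\<lambda>x. 0)"
    using c[of i] f[of i] coherent_dgs_scale[OF D, of "f i" "c i"] by (cases "c i = 0") auto
qed

section \<open>Positive hulls and natural extension\<close>

lemma posiI:
  fixes n :: nat and lam :: "nat \<Rightarrow> real"
  shows "n \<ge> 1 \<Longrightarrow> (\<And>i. i < n \<Longrightarrow> lam i > 0 \<and> fs i \<in> A) \<Longrightarrow> f = (\<lambda>x. \<Sum>i<n. lam i * fs i x) \<Longrightarrow> f \<in> posi A"
  unfolding posi_def by blast

lemma posiE:
  assumes "f \<in> posi A"
  obtains n :: nat and lam :: "nat \<Rightarrow> real" and fs where "n \<ge> 1" "\<And>i. i < n \<Longrightarrow> lam i > 0 \<and> fs i \<in> A" "f = (\<lambda>x. \<Sum>i<n. lam i * fs i x)"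
  using assms unfolding posi_def by force

lemma posi_base: "f \<in> A \<Longrightarrow> f \<in> posi A"
  by (rule posiI[of 1 "\<lambda>_. 1" "\<lambda>_. f"]) simp_all

lemma posi_scale:
  assumes "f \<in> posi A" "t > 0"
  shows "(\<lambda>x. t * f x) \<in> posi A"
proof -
  obtain n :: nat and lam fs where "n \<ge> 1" "\<And>i. i < n \<Longrightarrow> lam i > (0::real) \<and> fs i \<in> A" "f = (\<lambda>x. \<Sum>i<n. lam i * fs i x)"
    using assms(1) by (blast elim: posiE)
  with assms(2) show ?thesis
    by (intro posiI[of n "\<lambda>i. t * lam i" fs]) (auto simp: sum_distrib_left mult.assoc)
qed

lemma sum_lessThan_add: "(\<Sum>i<n + m. g i) = (\<Sum>i<n. g i) + (\<Sum>i<m. g (n + i))"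
  for g :: "nat \<Rightarrow> 'b::comm_monoid_add"
  by (induction m) (simp_all add: add.assoc)

lemma posi_add:
  assumes "f \<in> posi A" "g \<in> posi A"
  shows "(\<lambda>x. f x + g x) \<in> posi A"
proof -
  obtain n :: nat and lam fs where f: "n \<ge> 1" "\<And>i. i < n \<Longrightarrow> lam i > (0::real) \<and> fs i \<in> A" "f = (\<lambda>x. \<Sum>i<n. lam i * fs i x)"
    using assms(1) by (blast elim: posiE)
  obtain m :: nat and lam' gs where g: "m \<ge> 1" "\<And>i. i < m \<Longrightarrow> lam' i > (0::real) \<and> gs i \<in> A" "g = (\<lambda>x. \<Sum>i<m. lam' i * gs i x)"
    using assms(2) by (blast elim: posiE)
  define L where "L i = (if i < n then lam i else lam' (i - n))" for i
  define H where "H i = (if i < n then fs i else gs (i - n))" for i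
  have "(\<lambda>x. f x + g x) = (\<lambda>x. \<Sum>i<n + m. L i * H i x)"
    unfolding sum_lessThan_add f(3) g(3) L_def H_def by simp
  moreover have "L i > 0 \<and> H i \<in> A" if "i < n + m" for i
    using f(2)[of i] g(2)[of "i - n"] that unfolding L_def H_def by auto
  ultimately show ?thesis using f(1) by (intro posiI[of "n + m" L H]) auto
qed

lemma posi_subset_coherent:
  assumes D: "coherent_dgs D" and "A \<subseteq> D"
  shows "posi A \<subseteq> D"
proof
  fix f
  assume "f \<in> posi A"
  then obtain n :: nat and lam fs where "n \<ge> 1" "\<And>i. i < n \<Longrightarrow> lam i > (0::real) \<and> fs i \<in> A" "f = (\<lambda>x. \<Sum>i<n. lam i * fs i x)"
    by (blast elim: posiE)
  moreover have "(\<lambda>x. \<Sum>i\<in>{..<n}. lam i * fs i x) \<in> D"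
    by (rule add_closed_sum_mem[OF coherent_dgs_add[OF D], of "{..<n}" "\<lambda>i x. lam i * fs i x"])
       (use calculation assms in \<open>auto simp: lessThan_empty_iff intro: coherent_dgs_scale[OF D]\<close>)
  ultimately show "f \<in> D" by simp
qed

lemma natext_set_base: "f \<in> A \<Longrightarrow> f \<in> natext_set A"
  unfolding natext_set_def by (rule posi_base) simp

lemma natext_set_pos: "f \<in> pos_gambles \<Longrightarrow> f \<in> natext_set A"
  unfolding natext_set_def by (rule posi_base) simp

lemma natext_set_add: "f \<in> natext_set A \<Longrightarrow> g \<in> natext_set A \<Longrightarrow> (\<lambda>x. f x + g x) \<in> natext_set A"
  unfolding natext_set_def by (rule posi_add)

lemma natext_set_scale: "f \<in> natext_set A \<Longrightarrow> t > 0 \<Longrightarrow> (\<lambda>x. t * f x) \<in> natext_set A"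
  unfolding natext_set_def by (rule posi_scale)

lemma natext_set_upclosed:
  assumes "f \<in> natext_set A" "f \<in> gambles" "g \<in> gambles" "\<And>x. f x \<le> g x"
  shows "g \<in> natext_set A"
proof (cases "g = f")
  case False
  then obtain z where "g z \<noteq> f z" by auto
  with assms have "(\<lambda>x. g x - f x) \<in> pos_gambles"
    by (intro pos_gamblesI[where z = z] gambles_diff) auto
  from natext_set_add[OF assms(1) natext_set_pos[OF this]] show ?thesis by simp
qed (use assms in simp)

lemma natext_set_comp:
  assumes "F \<in> natext_set A" "surj \<sigma>" "\<And>f. f \<in> A \<Longrightarrow> (\<lambda>x. f (\<sigma> x)) \<in> A'"
  shows "(\<lambda>x. F (\<sigma> x)) \<in> natext_set A'"
proof -
  obtain n :: nat and lam fs where "n \<ge> 1" "\<And>i. i < n \<Longrightarrow> lam i > (0::real) \<and> fs i \<in> A \<union> pos_gambles"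
    "F = (\<lambda>x. \<Sum>i<n. lam i * fs i x)"
    using assms(1) unfolding natext_set_def by (blast elim: posiE)
  moreover have "(\<lambda>x. f (\<sigma> x)) \<in> A' \<union> pos_gambles" if "f \<in> A \<union> pos_gambles" for f
    using that assms(3) pos_gambles_comp_surj[OF _ assms(2)] by blast
  ultimately show ?thesis unfolding natext_set_def
    by (intro posiI[of n lam "\<lambda>i x. fs i (\<sigma> x)"]) auto
qed

lemma coherent_natext_set:
  assumes D: "coherent_dgs D" and "A \<subseteq> D"
  shows "coherent_dgs (natext_set A)"
proof -
  have sub: "natext_set A \<subseteq> D"
    unfolding natext_set_def using assms coherent_dgs_pos[OF D] by (intro posi_subset_coherent) auto
  show ?thesis
    unfolding coherent_dgs_def
  proof (intro conjI ballI allI impI)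
    show "natext_set A \<subseteq> gambles" using sub coherent_dgs_gambles[OF D] by blast
    show "f \<in> natext_set A" if "f \<in> gambles" "(\<forall>x. f x \<ge> 0) \<and> f \<noteq> (\<lambda>x. 0)" for f
      using that by (intro natext_set_pos) (simp add: pos_gambles_def)
    show "f \<notin> natext_set A" if "f \<in> gambles" "\<forall>x. f x \<le> 0" for f
      using that sub coherent_dgs_not_nonpos[OF D] by (meson not_less subsetD)
  qed (simp_all add: natext_set_scale natext_set_add)
qed

lemma coherent_natext_clp_set:
  assumes C: "C \<subseteq> Cdom" and P: "coherent_clp C P"
  shows "coherent_dgs (natext_clp_set C P)"
proof -
  obtain D where D: "coherent_dgs D" and P_eq: "\<forall>(f, B) \<in> C. P f B = lpr D f B"
    using P unfolding coherent_clp_def by blast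
  have "h \<in> D" if "(f, B) \<in> C" "ereal \<mu> < P f B" "h = (\<lambda>x. (f x - \<mu>) * indicator B x)" for f B \<mu> h
  proof -
    have "B \<noteq> {}" using that(1) C unfolding Cdom_def by auto
    then obtain b where "b \<in> B" by blast
    have "ereal \<mu> < Sup (ereal ` {\<mu>. (\<lambda>x. (f x - \<mu>) * indicator B x) \<in> D})"
      using that(1,2) P_eq unfolding lpr_def by auto
    then obtain \<mu>' where \<mu>': "(\<lambda>x. (f x - \<mu>') * indicator B x) \<in> D" "\<mu> < \<mu>'"
      by (auto simp: less_SUP_iff)
    have "(\<lambda>x. (\<mu>' - \<mu>) * indicator B x) \<in> pos_gambles"
      using \<mu>'(2) \<open>b \<in> B\<close> by (intro pos_gamblesI[where z = b] gambles_scale) auto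
    from coherent_dgs_add[OF D \<mu>'(1) coherent_dgs_pos[OF D this]] show "h \<in> D"
      unfolding that(3) by (simp add: algebra_simps)
  qed
  then show ?thesis
    unfolding natext_clp_set_def by (intro coherent_natext_set[OF D]) blast
qed

section \<open>The lower prevision of a coherent set\<close>

definition lower_prev :: "('a \<Rightarrow> real) set \<Rightarrow> ('a \<Rightarrow> real) \<Rightarrow> real" where
  "lower_prev D f = Sup {\<mu>. (\<lambda>x. f x - \<mu>) \<in> D}"

context
  fixes D :: "('a \<Rightarrow> real) set"
  assumes D: "coherent_dgs D"
begin

lemma lower_prev_set_nonempty:
  assumes "f \<in> gambles"
  shows "{\<mu>. (\<lambda>x. f x - \<mu>) \<in> D} \<noteq> {}"
proof -
  obtain M where M: "\<And>x. \<bar>f x\<bar> \<le> M" using gambles_bounded[OF assms] by blast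
  have "(\<lambda>x. f x - (- M - 1)) \<in> pos_gambles"
  proof (rule pos_gamblesI[where z = undefined])
    show "(\<lambda>x. f x - (- M - 1)) \<in> gambles" by (rule gambles_diff[OF assms gambles_const])
    show "0 \<le> f x - (- M - 1)" for x using M[of x] by linarith
    show "f undefined - (- M - 1) \<noteq> 0" using M[of undefined] by linarith
  qed
  then show ?thesis using coherent_dgs_pos[OF D] by blast
qed

lemma lower_prev_set_le:
  assumes "(\<lambda>x. f x - \<mu>) \<in> D" "\<And>x. f x \<le> b"
  shows "\<mu> \<le> b"
proof -
  obtain x where "f x - \<mu> > 0" using coherent_dgs_not_nonpos[OF D assms(1)] by blast
  with assms(2)[of x] show ?thesis by linarith
qed

lemma lower_prev_set_bdd:
  assumes "f \<in> gambles"
  shows "bdd_above {\<mu>. (\<lambda>x. f x - \<mu>) \<in> D}"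
proof -
  obtain M where "\<And>x. \<bar>f x\<bar> \<le> M" using gambles_bounded[OF assms] by blast
  then have "\<And>x. f x \<le> M" by (meson abs_le_D1)
  then show ?thesis using lower_prev_set_le unfolding bdd_above_def by blast
qed

lemma le_lower_prev: "f \<in> gambles \<Longrightarrow> (\<lambda>x. f x - \<mu>) \<in> D \<Longrightarrow> \<mu> \<le> lower_prev D f"
  unfolding lower_prev_def by (rule cSup_upper) (auto intro: lower_prev_set_bdd)

lemma lower_prev_less_mem:
  assumes f: "f \<in> gambles" and "\<mu> < lower_prev D f"
  shows "(\<lambda>x. f x - \<mu>) \<in> D"
proof -
  obtain \<mu>' where \<mu>': "(\<lambda>x. f x - \<mu>') \<in> D" "\<mu> < \<mu>'"
    using less_cSupE[OF assms(2)[unfolded lower_prev_def] lower_prev_set_nonempty[OF f]] by auto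
  then have "(\<lambda>x. f x - \<mu>) \<in> gambles" "\<And>x. f x - \<mu>' \<le> f x - \<mu>"
    using gambles_diff[OF f gambles_const] by auto
  then show ?thesis by (rule coherent_dgs_upclosed[OF D \<mu>'(1)])
qed

lemma lower_prev_le:
  assumes "f \<in> gambles" "\<And>x. f x \<le> b"
  shows "lower_prev D f \<le> b"
  unfolding lower_prev_def
  by (rule cSup_least[OF lower_prev_set_nonempty[OF assms(1)]]) (use lower_prev_set_le assms(2) in blast)

lemma le_lower_prev_bound:
  assumes f: "f \<in> gambles" and "\<And>x. a \<le> f x"
  shows "a \<le> lower_prev D f"
proof (rule field_le_epsilon)
  fix e :: real
  assume "e > 0"
  with assms have "(\<lambda>x. f x - (a - e)) \<in> pos_gambles"
    by (intro pos_gamblesI[where z = undefined] gambles_diff[OF f gambles_const]) (smt (verit))+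
  then have "a - e \<le> lower_prev D f"
    using le_lower_prev[OF f] coherent_dgs_pos[OF D] by blast
  then show "a \<le> lower_prev D f + e" by simp
qed

lemma lower_prev_const: "lower_prev D (\<lambda>x. c) = c"
  using lower_prev_le[of "\<lambda>x. c" c] le_lower_prev_bound[of "\<lambda>x. c" c] by simp

lemma lower_prev_nonneg_mem: "f \<in> D \<Longrightarrow> 0 \<le> lower_prev D f"
  using le_lower_prev[of f 0] coherent_dgs_gambles[OF D] by simp

lemma le_lower_prev_mem_or_zero:
  assumes f: "f \<in> gambles" and G: "G \<in> D \<or> G = (\<lambda>x. 0)" and le: "\<And>x. G x \<le> f x - \<nu>"
  shows "\<nu> \<le> lower_prev D f"
  using G
proof
  assume "G \<in> D"
  have "(\<lambda>x. f x - \<nu>) \<in> D"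
    by (rule coherent_dgs_upclosed[OF D \<open>G \<in> D\<close> gambles_diff[OF f gambles_const] le])
  then show ?thesis by (rule le_lower_prev[OF f])
next
  assume "G = (\<lambda>x. 0)"
  then have "\<nu> \<le> f x" for x using le[of x] by simp
  then show ?thesis by (rule le_lower_prev_bound[OF f])
qed

lemma lower_prev_superadd:
  assumes f: "f \<in> gambles" and g: "g \<in> gambles"
  shows "lower_prev D f + lower_prev D g \<le> lower_prev D (\<lambda>x. f x + g x)"
proof (rule field_le_epsilon)
  fix e :: real
  assume "e > 0"
  then have "(\<lambda>x. f x - (lower_prev D f - e/2)) \<in> D" "(\<lambda>x. g x - (lower_prev D g - e/2)) \<in> D"
    using lower_prev_less_mem f g by simp_all
  from coherent_dgs_add[OF D this]
  have "(\<lambda>x. (f x + g x) - (lower_prev D f + lower_prev D g - e)) \<in> D"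
    by (simp add: algebra_simps)
  from le_lower_prev[OF gambles_add[OF f g] this]
  show "lower_prev D f + lower_prev D g \<le> lower_prev D (\<lambda>x. f x + g x) + e" by simp
qed

lemma lower_prev_scale_ge:
  assumes f: "f \<in> gambles" and t: "t > 0"
  shows "t * lower_prev D f \<le> lower_prev D (\<lambda>x. t * f x)"
proof (rule field_le_epsilon)
  fix e :: real
  assume "e > 0"
  with t have "(\<lambda>x. f x - (lower_prev D f - e/t)) \<in> D"
    using lower_prev_less_mem f by simp
  from coherent_dgs_scale[OF D this t]
  have "(\<lambda>x. t * f x - (t * lower_prev D f - e)) \<in> D"
    using t by (simp add: algebra_simps)
  from le_lower_prev[OF gambles_scale[OF f] this]
  show "t * lower_prev D f \<le> lower_prev D (\<lambda>x. t * f x) + e" by simp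
qed

lemma lower_prev_scale_pos:
  assumes f: "f \<in> gambles" and t: "t > 0"
  shows "lower_prev D (\<lambda>x. t * f x) = t * lower_prev D f"
proof -
  have "(1/t) * lower_prev D (\<lambda>x. t * f x) \<le> lower_prev D (\<lambda>x. (1/t) * (t * f x))"
    using t by (intro lower_prev_scale_ge gambles_scale f) simp
  also have "(\<lambda>x. (1/t) * (t * f x)) = f" using t by simp
  finally have "lower_prev D (\<lambda>x. t * f x) \<le> t * lower_prev D f"
    using t by (simp add: field_simps)
  with lower_prev_scale_ge[OF assms] show ?thesis by simp
qed

lemma lower_prev_scale_nonneg:
  "f \<in> gambles \<Longrightarrow> t \<ge> 0 \<Longrightarrow> lower_prev D (\<lambda>x. t * f x) = t * lower_prev D f"
  using lower_prev_scale_pos[of f t] lower_prev_const[of 0] by (cases "t = 0") auto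

lemma lower_prev_scale_nonpos:
  "f \<in> gambles \<Longrightarrow> t \<le> 0 \<Longrightarrow> lower_prev D (\<lambda>x. t * f x) = - t * lower_prev D (\<lambda>x. - f x)"
  using lower_prev_scale_nonneg[OF gambles_uminus, of f "- t"] by simp

lemma lower_prev_le_upper_prev:
  "f \<in> gambles \<Longrightarrow> lower_prev D f \<le> - lower_prev D (\<lambda>x. - f x)"
  using lower_prev_superadd[OF _ gambles_uminus, of f f] lower_prev_const[of 0] by simp

lemma lower_prev_mono:
  assumes f: "f \<in> gambles" and g: "g \<in> gambles" and "\<And>x. f x \<le> g x"
  shows "lower_prev D f \<le> lower_prev D g"
  using lower_prev_superadd[OF f gambles_diff[OF g f]] le_lower_prev_bound[OF gambles_diff[OF g f], of 0] assms(3)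
  by force

lemma lower_prev_lipschitz:
  assumes f: "f \<in> gambles" and g: "g \<in> gambles" and "\<And>x. \<bar>f x - g x\<bar> \<le> e"
  shows "lower_prev D g - e \<le> lower_prev D f"
proof -
  have "lower_prev D g - e \<le> lower_prev D (\<lambda>x. g x - e)"
    using lower_prev_superadd[OF g gambles_const, of "- e"] lower_prev_const[of "- e"] by simp
  also have "\<dots> \<le> lower_prev D f"
    using assms(3) by (intro lower_prev_mono gambles_diff f g gambles_const) (smt (verit))
  finally show ?thesis .
qed

end

lemma lower_prev_scale_le:
  assumes D: "coherent_dgs D" and f: "f \<in> gambles"
    and "lower_prev D f \<le> q" "q \<le> - lower_prev D (\<lambda>x. - f x)"
  shows "lower_prev D (\<lambda>x. c * f x) \<le> c * q"
proof (cases "c \<ge> 0")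
  case True
  then show ?thesis using lower_prev_scale_nonneg[OF D f True] assms(3) by (simp add: mult_left_mono)
next
  case False
  then have "lower_prev D (\<lambda>x. c * f x) = - c * lower_prev D (\<lambda>x. - f x)"
    using lower_prev_scale_nonpos[OF D f] by simp
  also have "\<dots> \<le> - c * - q" using assms(4) False by (intro mult_left_mono) auto
  finally show ?thesis by simp
qed

lemma lower_prev_times_const:
  assumes D: "coherent_dgs D" and g: "g \<in> gambles"
  shows "lower_prev D (\<lambda>x. g x * w) = (if w \<ge> 0 then lower_prev D g * w else - lower_prev D (\<lambda>x. - g x) * w)"
  using lower_prev_scale_nonneg[OF D g, of w] lower_prev_scale_nonpos[OF D g, of w]
  by (simp add: mult.commute)

lemma lpr_UNIV_eqI:
  assumes le: "\<And>\<nu>. (\<lambda>z. F z - \<nu>) \<in> D \<Longrightarrow> \<nu> \<le> v"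
    and approx: "\<And>e. e > 0 \<Longrightarrow> \<exists>\<nu>. v - e < \<nu> \<and> (\<lambda>z. F z - \<nu>) \<in> D"
  shows "lpr D F UNIV = ereal v"
proof -
  let ?S = "{\<mu>. (\<lambda>x. F x - \<mu>) \<in> D}"
  have "lpr D F UNIV = Sup (ereal ` ?S)" unfolding lpr_def by simp
  also have "\<dots> = ereal v"
  proof (rule antisym)
    show "Sup (ereal ` ?S) \<le> ereal v" by (rule SUP_least) (use le in auto)
    show "ereal v \<le> Sup (ereal ` ?S)"
    proof (rule ereal_le_epsilon2)
      fix e :: real
      assume "0 < e"
      then obtain \<nu> where \<nu>: "v - e < \<nu>" "(\<lambda>z. F z - \<nu>) \<in> D" using approx by blast
      then have "ereal \<nu> \<le> Sup (ereal ` ?S)" by (intro SUP_upper) simp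
      moreover have "ereal v \<le> ereal \<nu> + ereal e" using \<nu>(1) by simp
      ultimately show "ereal v \<le> Sup (ereal ` ?S) + ereal e" by (meson add_right_mono order_trans)
    qed
  qed
  finally show ?thesis .
qed

lemma lpr_eq_lower_prev:
  assumes D: "coherent_dgs D" and f: "f \<in> gambles"
  shows "lpr D f UNIV = ereal (lower_prev D f)"
proof (rule lpr_UNIV_eqI)
  show "\<nu> \<le> lower_prev D f" if "(\<lambda>z. f z - \<nu>) \<in> D" for \<nu>
    by (rule le_lower_prev[OF D f that])
  show "\<exists>\<nu>. lower_prev D f - e < \<nu> \<and> (\<lambda>z. f z - \<nu>) \<in> D" if "e > 0" for e
    using that lower_prev_less_mem[OF D f, of "lower_prev D f - e/2"]
    by (intro exI[of _ "lower_prev D f - e/2"]) simp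
qed

lemma natext_eq_lower_prev:
  "C \<subseteq> Cdom \<Longrightarrow> coherent_clp C P \<Longrightarrow> f \<in> gambles \<Longrightarrow> natext C P f UNIV = ereal (lower_prev (natext_clp_set C P) f)"
  unfolding natext_def by (intro lpr_eq_lower_prev coherent_natext_clp_set)

section \<open>Linear majorants of the lower prevision\<close>

lemma lower_prev_majorant_homogeneous:
  assumes D: "coherent_dgs D" and \<psi>: "\<psi> \<in> gambles"
    and K_gambles: "\<And>f q. (f, q) \<in> K \<Longrightarrow> f \<in> gambles"
    and K_scale: "\<And>f q r. (f, q) \<in> K \<Longrightarrow> r > 0 \<Longrightarrow> ((\<lambda>x. r * f x), r * q) \<in> K"
    and K_major: "\<And>f q. (f, q) \<in> K \<Longrightarrow> lower_prev D f \<le> q"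
    and plus: "\<And>f q. (f, q) \<in> K \<Longrightarrow> lower_prev D (\<lambda>x. f x + \<psi> x) \<le> q + v"
    and minus: "\<And>f q. (f, q) \<in> K \<Longrightarrow> lower_prev D (\<lambda>x. f x - \<psi> x) \<le> q - v"
    and k: "(f, q) \<in> K"
  shows "lower_prev D (\<lambda>x. f x + t * \<psi> x) \<le> q + t * v"
proof -
  have f: "f \<in> gambles" using K_gambles k .
  consider "t = 0" | "t > 0" | "t < 0" by linarith
  then show ?thesis
  proof cases
    case 1
    then show ?thesis using K_major[OF k] by simp
  next
    case 2
    have eq: "(\<lambda>x. f x + t * \<psi> x) = (\<lambda>x. t * ((1/t) * f x + \<psi> x))" using 2 by (auto simp: field_simps)
    have "lower_prev D (\<lambda>x. f x + t * \<psi> x) = t * lower_prev D (\<lambda>x. (1/t) * f x + \<psi> x)"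
      unfolding eq by (rule lower_prev_scale_pos[OF D gambles_add[OF gambles_scale[OF f] \<psi>] 2])
    also have "\<dots> \<le> t * ((1/t) * q + v)" using plus[OF K_scale[OF k, of "1/t"]] 2 by simp
    finally show ?thesis using 2 by (simp add: distrib_left)
  next
    case 3
    then have s: "- t > 0" by simp
    have eq: "(\<lambda>x. f x + t * \<psi> x) = (\<lambda>x. - t * ((1 / - t) * f x - \<psi> x))" using 3 by (auto simp: field_simps)
    have "lower_prev D (\<lambda>x. f x + t * \<psi> x) = - t * lower_prev D (\<lambda>x. (1 / - t) * f x - \<psi> x)"
      unfolding eq by (rule lower_prev_scale_pos[OF D gambles_diff[OF gambles_scale[OF f] \<psi>] s])
    also have "\<dots> \<le> - t * ((1 / - t) * q - v)" using minus[OF K_scale[OF k s[THEN positive_imp_inverse_positive]]] s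
      by (simp add: divide_inverse)
    finally show ?thesis using 3 by (simp add: right_diff_distrib)
  qed
qed

(* The extension step of the Hahn-Banach theorem, for the superlinear functional lower_prev D. *)
lemma lower_prev_majorant_extend:
  fixes K :: "(('a \<Rightarrow> real) \<times> real) set"
  assumes D: "coherent_dgs D" and \<psi>: "\<psi> \<in> gambles"
    and K_gambles: "\<And>f q. (f, q) \<in> K \<Longrightarrow> f \<in> gambles"
    and K_add: "\<And>f q f' q'. (f, q) \<in> K \<Longrightarrow> (f', q') \<in> K \<Longrightarrow> ((\<lambda>x. f x + f' x), q + q') \<in> K"
    and K_scale: "\<And>f q r. (f, q) \<in> K \<Longrightarrow> r > 0 \<Longrightarrow> ((\<lambda>x. r * f x), r * q) \<in> K"
    and K_major: "\<And>f q. (f, q) \<in> K \<Longrightarrow> lower_prev D f \<le> q"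
  shows "\<exists>v. \<forall>(f, q) \<in> K. \<forall>t. lower_prev D (\<lambda>x. f x + t * \<psi> x) \<le> q + t * v"
proof (cases "K = {}")
  case False
  define L where "L = (\<lambda>(f, q). lower_prev D (\<lambda>x. f x + \<psi> x) - q)"
  define U where "U = (\<lambda>(f, q). q - lower_prev D (\<lambda>x. f x - \<psi> x))"
  have LU: "L k \<le> U k'" if "k \<in> K" "k' \<in> K" for k k'
  proof -
    obtain f q f' q' where k: "k = (f, q)" "k' = (f', q')" by fastforce
    have f: "f \<in> gambles" "f' \<in> gambles" using K_gambles that k by auto
    have "lower_prev D (\<lambda>x. f x + \<psi> x) + lower_prev D (\<lambda>x. f' x - \<psi> x)
        \<le> lower_prev D (\<lambda>x. (f x + \<psi> x) + (f' x - \<psi> x))"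
      using f \<psi> by (intro lower_prev_superadd[OF D] gambles_add gambles_diff)
    also have "\<dots> \<le> q + q'" using K_major[OF K_add] that k by simp
    finally show ?thesis unfolding L_def U_def k by simp
  qed
  obtain k0 where "k0 \<in> K" using False by blast
  define v where "v = Sup (L ` K)"
  have "L k \<le> v" if "k \<in> K" for k
    unfolding v_def using that LU[OF _ \<open>k0 \<in> K\<close>] by (intro cSup_upper bdd_aboveI) auto
  moreover have "v \<le> U k" if "k \<in> K" for k
    unfolding v_def using False LU[OF _ that] by (intro cSup_least) auto
  ultimately have plus: "lower_prev D (\<lambda>x. f x + \<psi> x) \<le> q + v"
    and minus: "lower_prev D (\<lambda>x. f x - \<psi> x) \<le> q - v" if "(f, q) \<in> K" for f q
    using that by (fastforce simp: L_def U_def)+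
  have "lower_prev D (\<lambda>x. f x + t * \<psi> x) \<le> q + t * v" if "(f, q) \<in> K" for f q t
    by (rule lower_prev_majorant_homogeneous[OF D \<psi> K_gambles K_scale K_major plus minus that])
  then show ?thesis by blast
qed simp

definition lincomb_pairs ::
  "('a \<Rightarrow> real) \<Rightarrow> real \<Rightarrow> (nat \<Rightarrow> 'a \<Rightarrow> real) \<Rightarrow> (nat \<Rightarrow> real) \<Rightarrow> nat \<Rightarrow> (('a \<Rightarrow> real) \<times> real) set" where
  "lincomb_pairs \<psi> q0 \<phi> q n =
     (\<lambda>(c0, c). ((\<lambda>x. c0 * \<psi> x + (\<Sum>i<n. c i * \<phi> i x)), c0 * q0 + (\<Sum>i<n. c i * q i))) ` UNIV"

lemma lincomb_pairs_add:
  assumes "(f, r) \<in> lincomb_pairs \<psi> q0 \<phi> q n" "(f', r') \<in> lincomb_pairs \<psi> q0 \<phi> q n"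
  shows "((\<lambda>x. f x + f' x), r + r') \<in> lincomb_pairs \<psi> q0 \<phi> q n"
proof -
  obtain c0 c where "f = (\<lambda>x. c0 * \<psi> x + (\<Sum>i<n. c i * \<phi> i x))" "r = c0 * q0 + (\<Sum>i<n. c i * q i)"
    using assms(1) unfolding lincomb_pairs_def by auto
  moreover obtain c0' c' where "f' = (\<lambda>x. c0' * \<psi> x + (\<Sum>i<n. c' i * \<phi> i x))" "r' = c0' * q0 + (\<Sum>i<n. c' i * q i)"
    using assms(2) unfolding lincomb_pairs_def by auto
  ultimately show ?thesis unfolding lincomb_pairs_def
    by (intro image_eqI[of _ _ "(c0 + c0', \<lambda>i. c i + c' i)"]) (auto simp: algebra_simps sum.distrib)
qed

lemma lincomb_pairs_scale:
  assumes "(f, r) \<in> lincomb_pairs \<psi> q0 \<phi> q n"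
  shows "((\<lambda>x. t * f x), t * r) \<in> lincomb_pairs \<psi> q0 \<phi> q n"
proof -
  obtain c0 c where "f = (\<lambda>x. c0 * \<psi> x + (\<Sum>i<n. c i * \<phi> i x))" "r = c0 * q0 + (\<Sum>i<n. c i * q i)"
    using assms unfolding lincomb_pairs_def by auto
  then show ?thesis unfolding lincomb_pairs_def
    by (intro image_eqI[of _ _ "(t * c0, \<lambda>i. t * c i)"]) (auto simp: algebra_simps sum_distrib_left)
qed

lemma lower_prev_linear_majorant:
  fixes n :: nat
  assumes D: "coherent_dgs D" and \<psi>: "\<psi> \<in> gambles"
    and q0: "lower_prev D \<psi> \<le> q0" "q0 \<le> - lower_prev D (\<lambda>x. - \<psi> x)"
  shows "(\<And>i. i < n \<Longrightarrow> \<phi> i \<in> gambles) \<Longrightarrow>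
    \<exists>q. \<forall>c0 c. lower_prev D (\<lambda>x. c0 * \<psi> x + (\<Sum>i<n. c i * \<phi> i x)) \<le> c0 * q0 + (\<Sum>i<n. c i * q i)"
proof (induction n)
  case 0
  show ?case using lower_prev_scale_le[OF D \<psi> q0] by simp
next
  case (Suc n)
  have \<phi>: "\<phi> i \<in> gambles" if "i < Suc n" for i using Suc.prems that .
  have "\<phi> i \<in> gambles" if "i < n" for i using \<phi> that by simp
  from Suc.IH[OF this] obtain q where q: "\<And>c0 c. lower_prev D (\<lambda>x. c0 * \<psi> x + (\<Sum>i<n. c i * \<phi> i x)) \<le> c0 * q0 + (\<Sum>i<n. c i * q i)"
    by blast
  have "\<exists>v. \<forall>(f, r) \<in> lincomb_pairs \<psi> q0 \<phi> q n. \<forall>t. lower_prev D (\<lambda>x. f x + t * \<phi> n x) \<le> r + t * v"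
  proof (rule lower_prev_majorant_extend[OF D \<phi>[OF lessI]])
    show "f \<in> gambles" if "(f, r) \<in> lincomb_pairs \<psi> q0 \<phi> q n" for f r
      using that unfolding lincomb_pairs_def by (auto intro!: gambles_add gambles_scale gambles_sum \<psi> \<phi> less_SucI)
    show "lower_prev D f \<le> r" if "(f, r) \<in> lincomb_pairs \<psi> q0 \<phi> q n" for f r
      using that q unfolding lincomb_pairs_def by auto
  qed (auto intro: lincomb_pairs_add lincomb_pairs_scale)
  then obtain v where "\<forall>(f, r) \<in> lincomb_pairs \<psi> q0 \<phi> q n. \<forall>t. lower_prev D (\<lambda>x. f x + t * \<phi> n x) \<le> r + t * v"
    by blast
  then have v: "lower_prev D (\<lambda>x. (c0 * \<psi> x + (\<Sum>i<n. c i * \<phi> i x)) + t * \<phi> n x)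
      \<le> (c0 * q0 + (\<Sum>i<n. c i * q i)) + t * v" for c0 c t
    unfolding lincomb_pairs_def by auto
  show ?case
  proof (intro exI allI)
    fix c0 c
    have "(\<Sum>i<n. c i * (q(n := v)) i) = (\<Sum>i<n. c i * q i)" by (rule sum.cong) auto
    then show "lower_prev D (\<lambda>x. c0 * \<psi> x + (\<Sum>i<Suc n. c i * \<phi> i x)) \<le> c0 * q0 + (\<Sum>i<Suc n. c i * (q(n := v)) i)"
      using v[of c0 c "c n"] by (simp add: add.assoc)
  qed
qed

section \<open>The independent product\<close>

definition prod_gens :: "'a set set \<Rightarrow> 'b set set \<Rightarrow> ('a \<Rightarrow> real) set \<Rightarrow> ('b \<Rightarrow> real) set \<Rightarrow> ('a \<times> 'b \<Rightarrow> real) set" where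
  "prod_gens B1 B2 D1 D2 =
     {h. \<exists>f2 E1. f2 \<in> D2 \<and> E1 \<in> B1 \<union> {UNIV} \<and> h = (\<lambda>(x, y). f2 y * indicator E1 x)} \<union>
     {h. \<exists>f1 E2. f1 \<in> D1 \<and> E2 \<in> B2 \<union> {UNIV} \<and> h = (\<lambda>(x, y). f1 x * indicator E2 y)}"

lemma prod_dgs_eq: "prod_dgs B1 B2 D1 D2 = natext_set (prod_gens B1 B2 D1 D2)"
  unfolding prod_dgs_def prod_gens_def ..

lemma prod_dgs_gen_right:
  "f2 \<in> D2 \<Longrightarrow> E \<in> B1 \<union> {UNIV} \<Longrightarrow> (\<lambda>z. f2 (snd z) * indicator E (fst z)) \<in> prod_dgs B1 B2 D1 D2"
  unfolding prod_dgs_eq prod_gens_def by (rule natext_set_base) (auto simp: case_prod_unfold)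

lemma prod_dgs_gen_left:
  "f1 \<in> D1 \<Longrightarrow> E \<in> B2 \<union> {UNIV} \<Longrightarrow> (\<lambda>z. f1 (fst z) * indicator E (snd z)) \<in> prod_dgs B1 B2 D1 D2"
  unfolding prod_dgs_eq prod_gens_def by (rule natext_set_base) (auto simp: case_prod_unfold)

lemma prod_gens_swap:
  assumes "f \<in> prod_gens B1 B2 D1 D2"
  shows "(\<lambda>z. f (prod.swap z)) \<in> prod_gens B2 B1 D2 D1"
proof -
  from assms consider
      (right) f2 E1 where "f2 \<in> D2" "E1 \<in> B1 \<union> {UNIV}" "f = (\<lambda>(x, y). f2 y * indicator E1 x)"
    | (left) f1 E2 where "f1 \<in> D1" "E2 \<in> B2 \<union> {UNIV}" "f = (\<lambda>(x, y). f1 x * indicator E2 y)"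
    unfolding prod_gens_def by blast
  then show ?thesis
  proof cases
    case right
    then show ?thesis unfolding prod_gens_def by (intro UnI2 CollectI exI[of _ f2] exI[of _ E1]) auto
  next
    case left
    then show ?thesis unfolding prod_gens_def by (intro UnI1 CollectI exI[of _ f1] exI[of _ E2]) auto
  qed
qed

lemma prod_dgs_swap:
  "F \<in> prod_dgs B1 B2 D1 D2 \<Longrightarrow> (\<lambda>z. F (prod.swap z)) \<in> prod_dgs B2 B1 D2 D1"
  unfolding prod_dgs_eq by (rule natext_set_comp) (auto intro: prod_gens_swap)

lemma lpr_prod_dgs_swap:
  "lpr (prod_dgs B1 B2 D1 D2) F UNIV = lpr (prod_dgs B2 B1 D2 D1) (\<lambda>z. F (prod.swap z)) UNIV"
proof -
  have "(\<lambda>z. F z - \<mu>) \<in> prod_dgs B1 B2 D1 D2 \<longleftrightarrow> (\<lambda>z. F (prod.swap z) - \<mu>) \<in> prod_dgs B2 B1 D2 D1" for \<mu>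
    using prod_dgs_swap[of "\<lambda>z. F z - \<mu>" B1 B2 D1 D2]
      prod_dgs_swap[of "\<lambda>z. F (prod.swap z) - \<mu>" B2 B1 D2 D1] by auto
  then show ?thesis unfolding lpr_def by simp
qed

lemma prod_gen_minorant:
  assumes D1: "coherent_dgs D1" and D2: "coherent_dgs D2"
    and f: "f \<in> prod_gens B1 B2 D1 D2 \<union> pos_gambles"
  shows "\<exists>\<phi> \<alpha>. \<phi> \<in> gambles \<and> 0 \<le> lower_prev D1 \<phi> \<and> (\<alpha> \<in> D2 \<or> \<alpha> = (\<lambda>y. 0))
    \<and> (\<forall>x y. \<phi> x * \<alpha> y \<le> f (x, y))"
proof -
  have zero: ?thesis if "\<And>x y. 0 \<le> f (x, y)"
    using that lower_prev_const[OF D1, of 0] by (intro exI[of _ "\<lambda>x. 0"] exI[of _ "\<lambda>y. 0"]) simp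
  from f consider
      (right) f2 E1 where "f2 \<in> D2" "f = (\<lambda>(x, y). f2 y * indicator E1 x)"
    | (left) f1 E2 where "f1 \<in> D1" "f = (\<lambda>(x, y). f1 x * indicator E2 y)"
    | (pos) "f \<in> pos_gambles"
    unfolding prod_gens_def by blast
  then show ?thesis
  proof cases
    case right
    then show ?thesis
      by (intro exI[of _ "indicator E1"] exI[of _ f2])
         (auto intro: le_lower_prev_bound[OF D1] simp: mult.commute)
  next
    case left
    show ?thesis
    proof (cases "E2 = {}")
      case True
      then show ?thesis using left by (intro zero) simp
    next
      case False
      then obtain y0 where "y0 \<in> E2" by blast
      then have "indicator E2 \<in> D2" by (intro coherent_dgs_pos[OF D2] pos_gamblesI[where z = y0]) auto
      with left show ?thesis
        by (intro exI[of _ f1] exI[of _ "indicator E2"])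
           (auto simp: lower_prev_nonneg_mem[OF D1] coherent_dgs_gambles[OF D1])
    qed
  next
    case pos
    then show ?thesis by (intro zero) (simp add: pos_gambles_def)
  qed
qed

lemma prod_gens_minorants:
  assumes D1: "coherent_dgs D1" and D2: "coherent_dgs D2"
    and fs: "\<forall>i<n. fs i \<in> prod_gens B1 B2 D1 D2 \<union> pos_gambles"
  shows "\<exists>\<phi> \<alpha>. \<forall>i<n. \<phi> i \<in> gambles \<and> 0 \<le> lower_prev D1 (\<phi> i) \<and> (\<alpha> i \<in> D2 \<or> \<alpha> i = (\<lambda>y. 0))
    \<and> (\<forall>x y. \<phi> i x * \<alpha> i y \<le> fs i (x, y))"
proof -
  have "\<forall>i\<in>{..<n}. \<exists>\<phi> \<alpha>. \<phi> \<in> gambles \<and> 0 \<le> lower_prev D1 \<phi> \<and> (\<alpha> \<in> D2 \<or> \<alpha> = (\<lambda>y. 0))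
      \<and> (\<forall>x y. \<phi> x * \<alpha> y \<le> fs i (x, y))"
    using prod_gen_minorant[OF D1 D2] fs by blast
  from bchoice[OF this] obtain \<phi> where "\<forall>i\<in>{..<n}. \<exists>\<alpha>. \<phi> i \<in> gambles \<and> 0 \<le> lower_prev D1 (\<phi> i)
      \<and> (\<alpha> \<in> D2 \<or> \<alpha> = (\<lambda>y. 0)) \<and> (\<forall>x y. \<phi> i x * \<alpha> y \<le> fs i (x, y))" ..
  from bchoice[OF this] show ?thesis by blast
qed

lemma prod_dgs_mem_le:
  assumes D1: "coherent_dgs D1" and D2: "coherent_dgs D2" and \<psi>: "\<psi> \<in> gambles" and t: "t \<in> gambles"
    and q0: "lower_prev D1 \<psi> \<le> q0" "q0 \<le> - lower_prev D1 (\<lambda>x. - \<psi> x)"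
    and mem: "(\<lambda>z. \<psi> (fst z) * t (snd z) - \<nu>) \<in> prod_dgs B1 B2 D1 D2"
  shows "\<nu> \<le> lower_prev D2 (\<lambda>y. q0 * t y)"
proof -
  obtain n :: nat and lam fs where "n \<ge> 1"
    and lam: "\<And>i. i < n \<Longrightarrow> lam i > (0::real) \<and> fs i \<in> prod_gens B1 B2 D1 D2 \<union> pos_gambles"
    and F: "(\<lambda>z. \<psi> (fst z) * t (snd z) - \<nu>) = (\<lambda>z. \<Sum>i<n. lam i * fs i z)"
    using mem unfolding prod_dgs_eq natext_set_def posi_def by auto
  obtain \<phi> \<alpha> where "\<forall>i<n. \<phi> i \<in> gambles \<and> 0 \<le> lower_prev D1 (\<phi> i) \<and> (\<alpha> i \<in> D2 \<or> \<alpha> i = (\<lambda>y. 0))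
      \<and> (\<forall>x y. \<phi> i x * \<alpha> i y \<le> fs i (x, y))"
    using prod_gens_minorants[OF D1 D2, of n fs] lam by blast
  then have \<phi>: "\<And>i. i < n \<Longrightarrow> \<phi> i \<in> gambles" "\<And>i. i < n \<Longrightarrow> 0 \<le> lower_prev D1 (\<phi> i)"
    and \<alpha>: "\<And>i. i < n \<Longrightarrow> \<alpha> i \<in> D2 \<or> \<alpha> i = (\<lambda>y. 0)"
    and minor: "\<And>i x y. i < n \<Longrightarrow> \<phi> i x * \<alpha> i y \<le> fs i (x, y)"
    by simp_all
  obtain q where q: "\<And>c0 c. lower_prev D1 (\<lambda>x. c0 * \<psi> x + (\<Sum>i<n. c i * \<phi> i x)) \<le> c0 * q0 + (\<Sum>i<n. c i * q i)"
    using lower_prev_linear_majorant[OF D1 \<psi> q0, of n \<phi>] \<phi>(1) by blast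
  have q_nonneg: "0 \<le> q i" if "i < n" for i
  proof -
    have "{..<n} \<inter> {j. j = i} = {i}" using that by auto
    then show ?thesis using q[of 0 "\<lambda>j. of_bool (j = i)"] \<phi>(2)[OF that] by simp
  qed
  define G where "G y = (\<Sum>i<n. lam i * q i * \<alpha> i y)" for y
  have "G \<in> D2 \<or> G = (\<lambda>y. 0)"
  proof (unfold G_def, rule coherent_dgs_nonneg_comb[OF D2])
    show "0 \<le> lam i * q i" if "i \<in> {..<n}" for i
      using lam[of i] q_nonneg[of i] that by simp
  qed (use \<alpha> in auto)
  moreover have "\<nu> \<le> q0 * t y - G y" for y
  proof -
    have "\<nu> \<le> t y * \<psi> x + (\<Sum>i<n. (- lam i * \<alpha> i y) * \<phi> i x)" for x
    proof -
      have "(\<Sum>i<n. lam i * (\<phi> i x * \<alpha> i y)) \<le> (\<Sum>i<n. lam i * fs i (x, y))"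
        using minor lam by (intro sum_mono mult_left_mono) (auto simp: less_imp_le)
      also have "\<dots> = \<psi> x * t y - \<nu>" using fun_cong[OF F, of "(x, y)"] by simp
      finally show ?thesis by (simp add: algebra_simps sum_negf)
    qed
    then have "\<nu> \<le> lower_prev D1 (\<lambda>x. t y * \<psi> x + (\<Sum>i<n. (- lam i * \<alpha> i y) * \<phi> i x))"
      using \<phi>(1) by (intro le_lower_prev_bound[OF D1] gambles_add gambles_scale \<psi> gambles_sum) auto
    also have "\<dots> \<le> t y * q0 + (\<Sum>i<n. (- lam i * \<alpha> i y) * q i)" by (rule q)
    finally show ?thesis by (simp add: G_def algebra_simps sum_negf)
  qed
  ultimately show ?thesis
    by (intro le_lower_prev_mem_or_zero[OF D2 gambles_scale[OF t]]) (simp_all add: algebra_simps)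
qed

lemma simple_prod_dgs_mem:
  assumes D2: "coherent_dgs D2" and s: "simple_meas B1 s"
    and h: "(\<lambda>y. h y - \<mu>) \<in> D2" and s\<mu>: "(\<lambda>x. s x * \<mu> - \<nu>) \<in> D1"
  shows "(\<lambda>z. s (fst z) * h (snd z) - \<nu>) \<in> prod_dgs B1 B2 D1 D2"
proof -
  obtain m :: nat and c :: "nat \<Rightarrow> real" and E where c: "\<And>k. k \<le> m \<Longrightarrow> c k \<ge> 0"
    and E: "\<And>k. k \<in> {1..m} \<Longrightarrow> E k \<in> B1" and s_eq: "s = (\<lambda>x. c 0 + (\<Sum>k=1..m. c k * indicator (E k) x))"
    using s unfolding simple_meas_def by blast
  define E' where "E' k = (if k = 0 then UNIV else E k)" for k
  define f where "f k = (\<lambda>z. (c k * (h (snd z) - \<mu>)) * indicator (E' k) (fst z))" for k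
  have s_sum: "s x = (\<Sum>k\<in>{0..m}. c k * indicator (E' k) x)" for x
    by (simp add: s_eq E'_def sum.atLeast_Suc_atMost)
  have "f k \<in> prod_dgs B1 B2 D1 D2 \<or> f k = (\<lambda>z. 0)" if "k \<in> {0..m}" for k
  proof (cases "c k = 0")
    case False
    with c[of k] that have "c k > 0" by simp
    with that E[of k] show ?thesis
      unfolding f_def E'_def by (intro disjI1 prod_dgs_gen_right coherent_dgs_scale[OF D2 h]) auto
  qed (simp add: f_def)
  then have sum: "(\<lambda>z. \<Sum>k\<in>{0..m}. f k z) \<in> prod_dgs B1 B2 D1 D2 \<or> (\<lambda>z. \<Sum>k\<in>{0..m}. f k z) = (\<lambda>z. 0)"
    unfolding prod_dgs_eq by (intro add_closed_sum_mem_or_zero[OF natext_set_add]) auto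
  have base: "(\<lambda>z. s (fst z) * \<mu> - \<nu>) \<in> prod_dgs B1 B2 D1 D2"
    using prod_dgs_gen_left[OF s\<mu>, of UNIV] by simp
  have eq: "(\<lambda>z. s (fst z) * h (snd z) - \<nu>) = (\<lambda>z. (s (fst z) * \<mu> - \<nu>) + (\<Sum>k\<in>{0..m}. f k z))"
  proof
    fix z
    have "(\<Sum>k\<in>{0..m}. f k z) = (h (snd z) - \<mu>) * s (fst z)"
      unfolding s_sum sum_distrib_left f_def by (rule sum.cong) (simp_all add: mult_ac)
    then show "s (fst z) * h (snd z) - \<nu> = (s (fst z) * \<mu> - \<nu>) + (\<Sum>k\<in>{0..m}. f k z)"
      by (simp add: algebra_simps)
  qed
  from sum show ?thesis
  proof
    assume "(\<lambda>z. \<Sum>k\<in>{0..m}. f k z) \<in> prod_dgs B1 B2 D1 D2"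
    with base show ?thesis unfolding eq prod_dgs_eq by (rule natext_set_add)
  next
    assume "(\<lambda>z. \<Sum>k\<in>{0..m}. f k z) = (\<lambda>z. 0)"
    then have "(\<lambda>z. (s (fst z) * \<mu> - \<nu>) + (\<Sum>k\<in>{0..m}. f k z)) = (\<lambda>z. s (fst z) * \<mu> - \<nu>)"
      by (simp add: fun_eq_iff)
    with base show ?thesis unfolding eq by simp
  qed
qed

lemma prod_dgs_mem_perturb:
  assumes mem: "(\<lambda>z. s (fst z) * h (snd z) - \<nu>) \<in> prod_dgs B1 B2 D1 D2"
    and g: "g \<in> gambles" and s: "s \<in> gambles" and h: "h \<in> gambles"
    and gs: "\<And>x. \<bar>g x - s x\<bar> \<le> \<delta>" and M: "\<And>y. \<bar>h y\<bar> \<le> M"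
  shows "(\<lambda>z. g (fst z) * h (snd z) - (\<nu> - \<delta> * M)) \<in> prod_dgs B1 B2 D1 D2"
proof -
  have "0 \<le> \<delta>" by (rule order_trans[OF abs_ge_zero gs])
  have le: "s (fst z) * h (snd z) - \<nu> \<le> g (fst z) * h (snd z) - (\<nu> - \<delta> * M)" for z
  proof -
    have "\<bar>(g (fst z) - s (fst z)) * h (snd z)\<bar> \<le> \<delta> * M"
      unfolding abs_mult using gs M \<open>0 \<le> \<delta>\<close> by (intro mult_mono) auto
    then show ?thesis by (simp add: left_diff_distrib abs_le_iff)
  qed
  have gz: "(\<lambda>z. s (fst z)) \<in> gambles" "(\<lambda>z. g (fst z)) \<in> gambles" "(\<lambda>z. h (snd z)) \<in> gambles"
    by (rule gambles_comp, fact)+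
  show ?thesis
    unfolding prod_dgs_eq
    by (rule natext_set_upclosed[OF mem[unfolded prod_dgs_eq] _ _ le])
       (intro gambles_diff gambles_mult gambles_const gz)+
qed

lemma meas_simple_approx:
  assumes "meas B g" "d > 0"
  shows "\<exists>s. simple_meas B s \<and> (\<forall>x. \<bar>g x - s x\<bar> \<le> d)"
proof -
  obtain gs :: "nat \<Rightarrow> _" where gs: "\<forall>n. simple_meas B (gs n)"
    and conv: "\<forall>e>0. \<exists>N. \<forall>n\<ge>N. \<forall>x. \<bar>g x - gs n x\<bar> \<le> e"
    using assms(1) unfolding meas_def by blast
  obtain N where "\<forall>n\<ge>N. \<forall>x. \<bar>g x - gs n x\<bar> \<le> d" using conv assms(2) by blast
  then have "\<forall>x. \<bar>g x - gs N x\<bar> \<le> d" by simp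
  with gs show ?thesis by blast
qed

lemma prod_dgs_approx:
  assumes D1: "coherent_dgs D1" and D2: "coherent_dgs D2" and g: "meas B1 g" and h: "h \<in> gambles"
    and "e > 0"
  shows "\<exists>\<nu>. lower_prev D1 (\<lambda>x. g x * lower_prev D2 h) - e < \<nu>
    \<and> (\<lambda>z. g (fst z) * h (snd z) - \<nu>) \<in> prod_dgs B1 B2 D1 D2"
proof -
  define w where "w = lower_prev D2 h"
  have gg: "g \<in> gambles" using g unfolding meas_def nonneg_gambles_def by simp
  obtain Gb where Gb: "Gb \<ge> 0" "\<And>x. \<bar>g x\<bar> \<le> Gb" using gambles_bounded[OF gg] by blast
  obtain M where M: "M \<ge> 0" "\<And>y. \<bar>h y\<bar> \<le> M" using gambles_bounded[OF h] by blast
  define K where "K = \<bar>w\<bar> + 1 + Gb + M"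
  have K: "K > 0" using Gb(1) M(1) by (simp add: K_def add_pos_nonneg)
  define \<delta> where "\<delta> = min 1 (e / (2 * K))"
  have \<delta>: "0 < \<delta>" "\<delta> \<le> 1" using \<open>e > 0\<close> K by (simp_all add: \<delta>_def)
  have "\<delta> * K \<le> e / (2 * K) * K" using K by (intro mult_right_mono) (simp_all add: \<delta>_def)
  then have \<delta>K: "\<delta> * K \<le> e / 2" using K by simp
  obtain s where s: "simple_meas B1 s" and gs: "\<And>x. \<bar>g x - s x\<bar> \<le> \<delta>"
    using meas_simple_approx[OF g \<delta>(1)] by blast
  have sg: "s \<in> gambles" using s unfolding simple_meas_def nonneg_gambles_def by simp
  define \<mu> where "\<mu> = w - \<delta>"
  define \<nu> where "\<nu> = lower_prev D1 (\<lambda>x. s x * \<mu>) - e / 4"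
  have "(\<lambda>y. h y - \<mu>) \<in> D2"
    unfolding \<mu>_def w_def using \<delta>(1) by (intro lower_prev_less_mem[OF D2 h]) simp
  moreover have "(\<lambda>x. s x * \<mu> - \<nu>) \<in> D1"
    unfolding \<nu>_def using \<open>e > 0\<close> by (intro lower_prev_less_mem[OF D1] gambles_scale_right sg) simp
  ultimately have s_mem: "(\<lambda>z. s (fst z) * h (snd z) - \<nu>) \<in> prod_dgs B1 B2 D1 D2"
    by (rule simple_prod_dgs_mem[OF D2 s])
  have mem: "(\<lambda>z. g (fst z) * h (snd z) - (\<nu> - \<delta> * M)) \<in> prod_dgs B1 B2 D1 D2"
    by (rule prod_dgs_mem_perturb[OF s_mem gg sg h gs M(2)])
  have "\<bar>s x * \<mu> - g x * w\<bar> \<le> \<delta> * (\<bar>w\<bar> + 1 + Gb)" for x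
  proof -
    have "\<bar>s x * \<mu> - g x * w\<bar> = \<bar>(s x - g x) * \<mu> - g x * \<delta>\<bar>" by (simp add: \<mu>_def algebra_simps)
    also have "\<dots> \<le> \<bar>(s x - g x) * \<mu>\<bar> + \<bar>g x * \<delta>\<bar>" by (rule abs_triangle_ineq4)
    also have "\<dots> = \<bar>s x - g x\<bar> * \<bar>\<mu>\<bar> + \<bar>g x\<bar> * \<delta>" using \<delta>(1) by (simp add: abs_mult)
    also have "\<dots> \<le> \<delta> * (\<bar>w\<bar> + 1) + Gb * \<delta>"
      using gs[of x] Gb(2)[of x] \<delta> by (intro add_mono mult_mono) (auto simp: \<mu>_def abs_minus_commute)
    finally show ?thesis by (simp add: algebra_simps)
  qed
  then have "lower_prev D1 (\<lambda>x. g x * w) - \<delta> * (\<bar>w\<bar> + 1 + Gb) \<le> lower_prev D1 (\<lambda>x. s x * \<mu>)"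
    by (intro lower_prev_lipschitz[OF D1] gambles_scale_right sg gg)
  moreover have "\<delta> * (\<bar>w\<bar> + 1 + Gb) + \<delta> * M \<le> e / 2"
    using \<delta>K unfolding K_def by (simp add: distrib_left)
  ultimately have "lower_prev D1 (\<lambda>x. g x * w) - e < \<nu> - \<delta> * M"
    unfolding \<nu>_def using \<open>e > 0\<close> by linarith
  with mem show ?thesis unfolding w_def by blast
qed

lemma lpr_prod_dgs_product:
  assumes D1: "coherent_dgs D1" and D2: "coherent_dgs D2" and g: "meas B1 g" and h: "h \<in> gambles"
  shows "lpr (prod_dgs B1 B2 D1 D2) (\<lambda>(x, y). g x * h y) UNIV = ereal (lower_prev D1 (\<lambda>x. g x * lower_prev D2 h))"
proof -
  have gg: "g \<in> gambles" and g0: "\<And>x. 0 \<le> g x" using g unfolding meas_def nonneg_gambles_def by auto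
  define w where "w = lower_prev D2 h"
  define q0 where "q0 = (if w \<ge> 0 then lower_prev D1 g else - lower_prev D1 (\<lambda>x. - g x))"
  have low: "0 \<le> lower_prev D1 g" by (rule le_lower_prev_bound[OF D1 gg g0])
  have up: "lower_prev D1 g \<le> - lower_prev D1 (\<lambda>x. - g x)" by (rule lower_prev_le_upper_prev[OF D1 gg])
  have q0: "lower_prev D1 g \<le> q0" "q0 \<le> - lower_prev D1 (\<lambda>x. - g x)" "0 \<le> q0"
    unfolding q0_def using low up by auto
  have "(\<lambda>(x, y). g x * h y) = (\<lambda>z. g (fst z) * h (snd z))" by auto
  moreover have "lpr (prod_dgs B1 B2 D1 D2) (\<lambda>z. g (fst z) * h (snd z)) UNIV = ereal (lower_prev D1 (\<lambda>x. g x * w))"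
  proof (rule lpr_UNIV_eqI)
    fix \<nu>
    assume "(\<lambda>z. g (fst z) * h (snd z) - \<nu>) \<in> prod_dgs B1 B2 D1 D2"
    from prod_dgs_mem_le[OF D1 D2 gg h q0(1,2) this]
    have "\<nu> \<le> lower_prev D2 (\<lambda>y. q0 * h y)" .
    also have "\<dots> = q0 * w" unfolding w_def by (rule lower_prev_scale_nonneg[OF D2 h q0(3)])
    also have "\<dots> = lower_prev D1 (\<lambda>x. g x * w)" unfolding q0_def lower_prev_times_const[OF D1 gg] by simp
    finally show "\<nu> \<le> lower_prev D1 (\<lambda>x. g x * w)" .
  qed (use prod_dgs_approx[OF D1 D2 g h] in \<open>simp add: w_def\<close>)
  ultimately show ?thesis by (simp add: w_def)
qed

lemma prod_clp_swap:
  "prod_clp B1 B2 C1 P1 C2 P2 F UNIV = prod_clp B2 B1 C2 P2 C1 P1 (\<lambda>z. F (prod.swap z)) UNIV"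
  unfolding prod_clp_def by (rule lpr_prod_dgs_swap)

lemma prod_clp_product:
  assumes C1: "C1 \<subseteq> Cdom" "coherent_clp C1 P1" and C2: "C2 \<subseteq> Cdom" "coherent_clp C2 P2"
    and g: "meas B1 g" and h: "h \<in> gambles"
  shows "prod_clp B1 B2 C1 P1 C2 P2 (\<lambda>(x, y). g x * h y) UNIV
             = natext C1 P1 (\<lambda>x. g x * real_of_ereal (natext C2 P2 h UNIV)) UNIV
         \<and> (natext C2 P2 h UNIV \<ge> 0 \<longrightarrow>
               natext C1 P1 (\<lambda>x. g x * real_of_ereal (natext C2 P2 h UNIV)) UNIV
                 = natext C1 P1 g UNIV * natext C2 P2 h UNIV)
         \<and> (natext C2 P2 h UNIV \<le> 0 \<longrightarrow>
               natext C1 P1 (\<lambda>x. g x * real_of_ereal (natext C2 P2 h UNIV)) UNIV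
                 = - natext C1 P1 (\<lambda>x. - g x) UNIV * natext C2 P2 h UNIV)"
proof -
  have D1: "coherent_dgs (natext_clp_set C1 P1)" and D2: "coherent_dgs (natext_clp_set C2 P2)"
    using C1 C2 by (simp_all add: coherent_natext_clp_set)
  have gg: "g \<in> gambles" using g unfolding meas_def nonneg_gambles_def by simp
  define w where "w = lower_prev (natext_clp_set C2 P2) h"
  have N2: "natext C2 P2 h UNIV = ereal w" unfolding w_def by (rule natext_eq_lower_prev[OF C2 h])
  have N1: "natext C1 P1 f UNIV = ereal (lower_prev (natext_clp_set C1 P1) f)" if "f \<in> gambles" for f
    by (rule natext_eq_lower_prev[OF C1 that])
  have "prod_clp B1 B2 C1 P1 C2 P2 (\<lambda>(x, y). g x * h y) UNIV = ereal (lower_prev (natext_clp_set C1 P1) (\<lambda>x. g x * w))"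
    unfolding prod_clp_def w_def by (rule lpr_prod_dgs_product[OF D1 D2 g h])
  then show ?thesis
    unfolding N2 real_of_ereal.simps N1[OF gambles_scale_right[OF gg]] N1[OF gg] N1[OF gambles_uminus[OF gg]]
    using lower_prev_times_const[OF D1 gg, of w] by simp
qed

theorem corollary22:
  fixes \<B>1 :: "'a set set" and \<B>2 :: "'b set set"
    and C1 :: "(('a \<Rightarrow> real) \<times> 'a set) set" and P1 :: "('a \<Rightarrow> real) \<Rightarrow> 'a set \<Rightarrow> ereal"
    and C2 :: "(('b \<Rightarrow> real) \<times> 'b set) set" and P2 :: "('b \<Rightarrow> real) \<Rightarrow> 'b set \<Rightarrow> ereal"
  assumes "{} \<notin> \<B>1" and "{} \<notin> \<B>2"
    and "C1 \<subseteq> Cdom" and "C2 \<subseteq> Cdom"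
    and "coherent_clp C1 P1" and "coherent_clp C2 P2"
  shows "(\<forall>g h. meas \<B>1 g \<and> h \<in> gambles \<longrightarrow>
           prod_clp \<B>1 \<B>2 C1 P1 C2 P2 (\<lambda>(x, y). g x * h y) UNIV
             = natext C1 P1 (\<lambda>x. g x * real_of_ereal (natext C2 P2 h UNIV)) UNIV
           \<and> (natext C2 P2 h UNIV \<ge> 0 \<longrightarrow>
               natext C1 P1 (\<lambda>x. g x * real_of_ereal (natext C2 P2 h UNIV)) UNIV
                 = natext C1 P1 g UNIV * natext C2 P2 h UNIV)
           \<and> (natext C2 P2 h UNIV \<le> 0 \<longrightarrow>
               natext C1 P1 (\<lambda>x. g x * real_of_ereal (natext C2 P2 h UNIV)) UNIV
                 = - natext C1 P1 (\<lambda>x. - g x) UNIV * natext C2 P2 h UNIV))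
    \<and> (\<forall>g h. meas \<B>2 g \<and> h \<in> gambles \<longrightarrow>
           prod_clp \<B>1 \<B>2 C1 P1 C2 P2 (\<lambda>(x, y). h x * g y) UNIV
             = natext C2 P2 (\<lambda>y. g y * real_of_ereal (natext C1 P1 h UNIV)) UNIV
           \<and> (natext C1 P1 h UNIV \<ge> 0 \<longrightarrow>
               natext C2 P2 (\<lambda>y. g y * real_of_ereal (natext C1 P1 h UNIV)) UNIV
                 = natext C2 P2 g UNIV * natext C1 P1 h UNIV)
           \<and> (natext C1 P1 h UNIV \<le> 0 \<longrightarrow>
               natext C2 P2 (\<lambda>y. g y * real_of_ereal (natext C1 P1 h UNIV)) UNIV
                 = - natext C2 P2 (\<lambda>y. - g y) UNIV * natext C1 P1 h UNIV))"
proof -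
  have swap: "prod_clp \<B>1 \<B>2 C1 P1 C2 P2 (\<lambda>(x, y). h x * g y) UNIV
      = prod_clp \<B>2 \<B>1 C2 P2 C1 P1 (\<lambda>(x, y). g x * h y) UNIV" for g :: "'b \<Rightarrow> real" and h :: "'a \<Rightarrow> real"
    by (simp add: prod_clp_swap[of \<B>1] case_prod_unfold mult.commute)
  show ?thesis
    using prod_clp_product[OF assms(3,5,4,6), of \<B>1 _ _ \<B>2] prod_clp_product[OF assms(4,6,3,5), of \<B>2 _ _ \<B>1]
    unfolding swap by blast
qed

end
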